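(* (Dobinski's formula) Let $\lambda$ be a nonzero real number and $x$ a real number with $|\lambda x|<1$. Then for every integer $n\ge0$, \[ \mathrm{Bel}_{n,\lambda}(x)=e_{\lambda}^{-1}(x)\Big(x\frac{d}{dx}\Big)^{n}e_{\lambda}(x)=e_{\lambda}^{-1}(x)\sum_{k=0}^{\infty}\frac{(1)_{k,\lambda}}{k!}\,k^{n}x^{k}. \]
   Context: For nonzero real $\lambda$: $(1)_{0,\lambda}=1$, $(1)_{k,\lambda}=1(1-\lambda)\cdots(1-(k-1)\lambda)$ for $k\ge1$; $e_\lambda(x)=(1+\lambda x)^{1/\lambda}$ and $e_\lambda^{-1}(x)=(1+\lambda x)^{-1/\lambda}$. The new type degenerate Bell polynomials $\mathrm{Bel}_{n,\lambda}(x)$ are defined by the generating function $e_{\lambda}(xe^{t})\,e_{\lambda}^{-1}(x)=\sum_{n=0}^{\infty}\mathrm{Bel}_{n,\lambda}(x)\frac{t^{n}}{n!}$, i.e. $\big(\frac{1+\lambda xe^t}{1+\lambda x}\big)^{1/\lambda}$ expanded in powers of $t$. $(x\frac{d}{dx})^n$ denotes the $n$-fold iterate of the operator $f\mapsto xf'(x)$. *)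

theory Defs
  imports "HOL-Analysis.Analysis"
begin

definition deg_fall_one :: "real \<Rightarrow> nat \<Rightarrow> real" where
  "deg_fall_one l k = (\<Prod>i<k. 1 - real i * l)"

definition e_lam :: "real \<Rightarrow> real \<Rightarrow> real" where
  "e_lam l x = (1 + l * x) powr (1 / l)"

definition e_lam_inv :: "real \<Rightarrow> real \<Rightarrow> real" where
  "e_lam_inv l x = (1 + l * x) powr (- 1 / l)"

text \<open>New type degenerate Bell polynomials: n! times the n-th Taylor coefficient at t = 0
  of the generating function e_lambda(x e^t) e_lambda^{-1}(x), i.e. its n-th derivative at 0.\<close>
definition Bel_lam :: "nat \<Rightarrow> real \<Rightarrow> real \<Rightarrow> real" where
  "Bel_lam n l x = (deriv ^^ n) (\<lambda>t. e_lam l (x * exp t) * e_lam_inv l x) 0"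

definition xD :: "(real \<Rightarrow> real) \<Rightarrow> real \<Rightarrow> real" where
  "xD f = (\<lambda>x. x * deriv f x)"

end

theory Submission
  imports Defs
begin

text \<open>Substituting \<open>y = x e^t\<close> turns the Euler operator \<open>x d/dx\<close> into \<open>d/dt\<close>, so the
  \<open>n\<close>-th \<open>t\<close>-derivative at \<open>t = 0\<close> of \<open>e_lambda(x e^t) e_lambda^-1(x)\<close> is
  \<open>e_lambda^-1(x) (x d/dx)^n e_lambda(x)\<close>. The binomial series gives
  \<open>e_lambda(y) = sum_k (1)_{k,lambda} y^k / k!\<close> for \<open>|lambda y| < 1\<close>, and \<open>x d/dx\<close> acts on a
  power series by multiplying its \<open>k\<close>-th coefficient by \<open>k\<close>.\<close>

lemma gbinomial_inverse_mult_power: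
  fixes l :: real
  assumes "l \<noteq> 0"
  shows "((1 / l) gchoose k) * l ^ k = deg_fall_one l k / fact k"
proof -
  have "((1 / l) gchoose k) * l ^ k = (\<Prod>i<k. (1 / l - real i) * l) / fact k"
    by (simp add: gbinomial_prod_rev prod.distrib atLeast0LessThan)
  also have "(\<Prod>i<k. (1 / l - real i) * l) = deg_fall_one l k"
    unfolding deg_fall_one_def using assms by (intro prod.cong) (auto simp: field_simps)
  finally show ?thesis .
qed

lemma e_lam_sums:
  fixes l y :: real
  assumes "l \<noteq> 0" and "\<bar>y\<bar> < 1 / \<bar>l\<bar>"
  shows "(\<lambda>k. deg_fall_one l k / fact k * y ^ k) sums e_lam l y"
proof -
  have "\<bar>l * y\<bar> < 1"
    using assms by (simp add: abs_mult field_simps)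
  from gen_binomial_real[OF this, of "1 / l"]
  show ?thesis
    by (simp add: e_lam_def power_mult_distrib mult.assoc [symmetric]
        gbinomial_inverse_mult_power[OF assms(1)])
qed

lemma power_series_has_field_derivative:
  fixes a :: "nat \<Rightarrow> real"
  assumes sums: "\<And>y. \<bar>y\<bar> < r \<Longrightarrow> (\<lambda>k. a k * y ^ k) sums f y" and z: "\<bar>z\<bar> < r"
  shows "(f has_field_derivative (\<Sum>k. diffs a k * z ^ k)) (at z)"
proof -
  have "((\<lambda>y. \<Sum>k. a k * y ^ k) has_field_derivative (\<Sum>k. diffs a k * z ^ k)) (at z)"
    by (rule termdiffs_strong') (use sums z in \<open>auto simp: sums_iff\<close>)
  then show ?thesis
    by (rule has_field_derivative_transform_within_open[where S = "ball 0 r"])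
       (use sums z in \<open>auto simp: sums_iff\<close>)
qed

lemma xD_power_series_sums:
  fixes a :: "nat \<Rightarrow> real"
  assumes sums: "\<And>y. \<bar>y\<bar> < r \<Longrightarrow> (\<lambda>k. a k * y ^ k) sums f y" and y: "\<bar>y\<bar> < r"
  shows "(\<lambda>k. a k * real k * y ^ k) sums xD f y"
proof -
  have "summable (\<lambda>k. diffs a k * y ^ k)"
    by (rule termdiff_converges[of y r]) (use sums y in \<open>auto simp: sums_iff\<close>)
  moreover have "deriv f y = (\<Sum>k. diffs a k * y ^ k)"
    using power_series_has_field_derivative[OF sums y] by (rule DERIV_imp_deriv)
  ultimately have "(\<lambda>k. diffs a k * y ^ k) sums deriv f y"
    by (simp add: summable_sums)
  then have "(\<lambda>k. y * (diffs a k * y ^ k)) sums (y * deriv f y)"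
    by (rule sums_mult)
  then have "(\<lambda>k. a (Suc k) * real (Suc k) * y ^ Suc k) sums xD f y"
    by (simp add: xD_def diffs_def mult_ac)
  then show ?thesis
    using sums_Suc_iff[of "\<lambda>k. a k * real k * y ^ k"] by simp
qed

lemma xD_iterate_power_series_sums:
  fixes a :: "nat \<Rightarrow> real"
  assumes "\<And>y. \<bar>y\<bar> < r \<Longrightarrow> (\<lambda>k. a k * y ^ k) sums f y" and "\<bar>y\<bar> < r"
  shows "(\<lambda>k. a k * real k ^ n * y ^ k) sums (xD ^^ n) f y"
  using assms(2)
proof (induction n arbitrary: y)
  case 0
  then show ?case using assms(1) by simp
next
  case (Suc n)
  from xD_power_series_sums[OF Suc.IH Suc.prems] show ?case
    by (simp add: mult_ac)
qed

lemma deriv_iterate_comp_scaled_exp: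
  fixes f :: "real \<Rightarrow> real"
  assumes S: "open S"
    and diff: "\<And>m z. z \<in> S \<Longrightarrow> (xD ^^ m) f field_differentiable at z"
    and "x * exp t \<in> S"
  shows "(deriv ^^ n) (\<lambda>s. f (x * exp s) * c) t = (xD ^^ n) f (x * exp t) * c"
  using assms(3)
proof (induction n arbitrary: t)
  case 0
  then show ?case by simp
next
  case (Suc n)
  have "open ((\<lambda>s. x * exp s) -` S)"
    by (intro open_vimage S continuous_intros)
  then have "eventually (\<lambda>s. x * exp s \<in> S) (nhds t)"
    using eventually_nhds_in_open Suc.prems by fastforce
  then have ev: "eventually (\<lambda>s. (deriv ^^ n) (\<lambda>s. f (x * exp s) * c) s
                                  = (xD ^^ n) f (x * exp s) * c) (nhds t)"
    by (rule eventually_mono) (use Suc.IH in blast)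
  have "((xD ^^ n) f has_field_derivative deriv ((xD ^^ n) f) (x * exp t)) (at (x * exp t))"
    using diff[OF Suc.prems] by (rule field_differentiable_derivI)
  from DERIV_cmult_right[OF DERIV_chain2[OF this DERIV_cmult[OF DERIV_exp]], of c]
  have "((\<lambda>s. (xD ^^ n) f (x * exp s) * c) has_real_derivative xD ((xD ^^ n) f) (x * exp t) * c) (at t)"
    by (simp add: xD_def mult_ac)
  then have "deriv (\<lambda>s. (xD ^^ n) f (x * exp s) * c) t = (xD ^^ Suc n) f (x * exp t) * c"
    by (simp add: DERIV_imp_deriv)
  then show ?case
    by (simp add: deriv_cong_ev[OF ev refl])
qed

lemma e_lam_xD_iterate_sums:
  fixes l y :: real
  assumes "l \<noteq> 0" and "\<bar>y\<bar> < 1 / \<bar>l\<bar>"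
  shows "(\<lambda>k. deg_fall_one l k / fact k * real k ^ n * y ^ k) sums (xD ^^ n) (e_lam l) y"
  by (rule xD_iterate_power_series_sums[OF e_lam_sums[OF assms(1)] assms(2)])

theorem theorem6:
  fixes l x :: real and n :: nat
  assumes "l \<noteq> 0" and "\<bar>l * x\<bar> < 1"
  shows "Bel_lam n l x = e_lam_inv l x * (xD ^^ n) (e_lam l) x
         \<and> summable (\<lambda>k. deg_fall_one l k / fact k * real k ^ n * x ^ k)
         \<and> e_lam_inv l x * (xD ^^ n) (e_lam l) x
           = e_lam_inv l x * (\<Sum>k. deg_fall_one l k / fact k * real k ^ n * x ^ k)"
proof -
  let ?r = "1 / \<bar>l\<bar>"
  have x: "\<bar>x\<bar> < ?r"
    using assms by (simp add: abs_mult field_simps)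
  have "(xD ^^ m) (e_lam l) field_differentiable at z" if "z \<in> ball 0 ?r" for m z
    using power_series_has_field_derivative[where r = ?r, OF e_lam_xD_iterate_sums[OF assms(1)]] that
    by (auto simp: field_differentiable_def)
  then have "Bel_lam n l x = (xD ^^ n) (e_lam l) x * e_lam_inv l x"
    using deriv_iterate_comp_scaled_exp[of "ball 0 ?r" "e_lam l" x 0 n] x
    by (simp add: Bel_lam_def)
  then show ?thesis
    using e_lam_xD_iterate_sums[OF assms(1) x, of n] by (simp add: sums_iff)
qed

end
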